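(* Let $P$ be a non-invertible bounded normal operator in a Hilbert space $\mathcal H$, and suppose either there exists $\gamma\in(0,\pi/2)$ such that $\sigma(P)\subset\overline{\mathcal C_\gamma}$, or $\gamma=0$ and $P$ is non-negative self-adjoint. Then (a) for $q\in(-\mathcal C_{\pi-\gamma})\cup\mathcal D(0,1/\|P\|)$, $I-qP$ is invertible and $\|(I-qP)^{-1}\|=\max_{\lambda\in\sigma(P)}|1-q\lambda|^{-1}$; (b) for any $\gamma'\in(\gamma,\pi/2)$, $\|(I-qP)^{-1}\|\le 1/\sin(\gamma'-\gamma)$ for all $q\in-\mathcal C_{\pi-\gamma'}$; (c) for any $r\in(0,1)$ there exists $C(r)$ independent of $\gamma$ such that if $\sin\gamma\in(0,1-r)$, then $\|(I-qP)^{-1}\|\le C(r)/|1-q\|P\||$ for all $q\in\mathcal D(0,(1-\sin\gamma)/\|P\|)$; (d) if $P\ge0$ is self-adjoint, then $\|(I-qP)^{-1}\|\le 4/|1-q\|P\||$ for all $q\in\mathcal D(0,1/\|P\|)$.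
   Context: $\mathcal C_\gamma=\{\rho e^{i\varphi}:\rho>0,\ \varphi\in(-\gamma,\gamma)\}$ (for $\gamma=0$ its closure is understood as $[0,+\infty)$), $-\mathcal C_\gamma=\{-z:z\in\mathcal C_\gamma\}$, an overline denotes closure, $\sigma(P)$ is the spectrum of $P$, and $\mathcal D(0,r)$ is the open disc of radius $r$ centered at $0$. *)

theory Defs
  imports "HOL-Analysis.Analysis"
begin

class complex_vector_space = real_vector +
  fixes scaleC :: "complex \<Rightarrow> 'a \<Rightarrow> 'a" (infixr "*\<^sub>C" 75)
  assumes scaleC_add_right: "a *\<^sub>C (x + y) = a *\<^sub>C x + a *\<^sub>C y"
    and scaleC_add_left: "(a + b) *\<^sub>C x = a *\<^sub>C x + b *\<^sub>C x"
    and scaleC_scaleC: "a *\<^sub>C (b *\<^sub>C x) = (a * b) *\<^sub>C x"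
    and scaleC_one: "1 *\<^sub>C x = x"
    and scaleC_of_real: "complex_of_real r *\<^sub>C x = r *\<^sub>R x"

class complex_inner = complex_vector_space + real_normed_vector +
  fixes cinner :: "'a \<Rightarrow> 'a \<Rightarrow> complex"
  assumes cinner_commute: "cinner x y = cnj (cinner y x)"
    and cinner_add_left: "cinner (x + y) z = cinner x z + cinner y z"
    and cinner_scaleC_left: "cinner (a *\<^sub>C x) y = cnj a * cinner x y"
    and cinner_self_real: "Im (cinner x x) = 0"
    and cinner_self_nonneg: "0 \<le> Re (cinner x x)"
    and cinner_self_eq_zero: "cinner x x = 0 \<longleftrightarrow> x = 0"
    and norm_eq_sqrt_cinner: "norm x = sqrt (Re (cinner x x))"

class chilbert_space = complex_inner + complete_space

definition bounded_clinear :: "('a::complex_inner \<Rightarrow> 'b::complex_inner) \<Rightarrow> bool" where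
  "bounded_clinear f \<longleftrightarrow> bounded_linear f \<and> (\<forall>c x. f (c *\<^sub>C x) = c *\<^sub>C f x)"

definition is_adjoint :: "('a::complex_inner \<Rightarrow> 'a) \<Rightarrow> ('a \<Rightarrow> 'a) \<Rightarrow> bool" where
  "is_adjoint P Q \<longleftrightarrow> (\<forall>x y. cinner (P x) y = cinner x (Q y))"

definition normal_op :: "('a::complex_inner \<Rightarrow> 'a) \<Rightarrow> bool" where
  "normal_op P \<longleftrightarrow> bounded_clinear P \<and>
     (\<exists>Q. bounded_clinear Q \<and> is_adjoint P Q \<and> P \<circ> Q = Q \<circ> P)"

definition selfadjoint_op :: "('a::complex_inner \<Rightarrow> 'a) \<Rightarrow> bool" where
  "selfadjoint_op P \<longleftrightarrow> bounded_clinear P \<and> is_adjoint P P"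

definition nonneg_op :: "('a::complex_inner \<Rightarrow> 'a) \<Rightarrow> bool" where
  "nonneg_op P \<longleftrightarrow> (\<forall>x. Im (cinner (P x) x) = 0 \<and> 0 \<le> Re (cinner (P x) x))"

definition op_invertible :: "('a::complex_inner \<Rightarrow> 'a) \<Rightarrow> bool" where
  "op_invertible T \<longleftrightarrow> bounded_clinear T \<and>
     (\<exists>S. bounded_clinear S \<and> S \<circ> T = id \<and> T \<circ> S = id)"

definition op_spectrum :: "('a::complex_inner \<Rightarrow> 'a) \<Rightarrow> complex set" where
  "op_spectrum P = {\<mu>. \<not> op_invertible (\<lambda>x. \<mu> *\<^sub>C x - P x)}"

definition sector :: "real \<Rightarrow> complex set" where
  "sector \<gamma> = {z. \<exists>\<rho> \<phi>. \<rho> > 0 \<and> -\<gamma> < \<phi> \<and> \<phi> < \<gamma> \<and> z = complex_of_real \<rho> * cis \<phi>}"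

definition res_op :: "complex \<Rightarrow> ('a::complex_inner \<Rightarrow> 'a) \<Rightarrow> ('a \<Rightarrow> 'a)" where
  "res_op q P = inv (\<lambda>x. x - q *\<^sub>C P x)"

definition thm_hyp :: "('a::complex_inner \<Rightarrow> 'a) \<Rightarrow> real \<Rightarrow> bool" where
  "thm_hyp P \<gamma> \<longleftrightarrow> normal_op P \<and> \<not> op_invertible P \<and>
     ((0 < \<gamma> \<and> \<gamma> < pi/2 \<and> op_spectrum P \<subseteq> closure (sector \<gamma>)) \<or>
      (\<gamma> = 0 \<and> selfadjoint_op P \<and> nonneg_op P))"

end

theory Submission
  imports Defs "HOL-Complex_Analysis.Cauchy_Integral_Formula"
begin

(* The heart of the proof is the identity ||T^-1|| = 1 / min {|z| : z in sigma(T)} for an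
   invertible normal operator T, applied to T = I - qP, whose spectrum is
   {1 - q mu : mu in sigma(P)}.  The lower bound holds for every invertible operator, by a
   Neumann series perturbation.  For the upper bound, let d be the distance from 0 to sigma(T).
   The map l |-> (T - l)^-1 is holomorphic on the disc |l| < d and its Taylor coefficients
   at 0 are the powers T^-(n+1), so the Cauchy estimates give ||T^-(n+1)|| <= B / rho^n for
   every rho < d.  Normality gives ||T^-1||^(2^k) <= ||T^-(2^k)||, and letting k grow yields
   ||T^-1|| <= 1 / rho.
   Parts (b)-(d) then reduce to elementary lower bounds for |1 - q mu| with mu in the closed
   sector; a nonnegative self-adjoint operator has its spectrum in [0, infinity), and in (c)
   the constant C(r) = 4 works for every r. *)

subclass (in chilbert_space) banach ..

declare scaleC_one [simp] scaleC_scaleC [simp]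

lemma scaleC_zero_left [simp]: "0 *\<^sub>C (x::'a::complex_vector_space) = 0"
  using scaleC_of_real[of 0 x] by simp

lemma scaleC_zero_right [simp]: "a *\<^sub>C (0::'a::complex_vector_space) = 0"
  using scaleC_add_right[of a 0 0] by simp

lemma scaleR_eq_scaleC: "r *\<^sub>R (x::'a::complex_vector_space) = complex_of_real r *\<^sub>C x"
  by (simp add: scaleC_of_real)

lemma uminus_eq_scaleC: "- (x::'a::complex_vector_space) = (-1) *\<^sub>C x"
  using scaleC_of_real[of "-1" x] by simp

lemma scaleC_minus_right: "a *\<^sub>C (- x) = - (a *\<^sub>C (x::'a::complex_vector_space))"
  by (simp only: uminus_eq_scaleC[of x] uminus_eq_scaleC[of "a *\<^sub>C x"] scaleC_scaleC mult.commute)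

lemma scaleC_minus_left: "(- a) *\<^sub>C x = - (a *\<^sub>C (x::'a::complex_vector_space))"
  by (simp only: uminus_eq_scaleC[of "a *\<^sub>C x"] scaleC_scaleC) simp

lemma scaleC_diff_right: "a *\<^sub>C (x - y) = a *\<^sub>C x - a *\<^sub>C (y::'a::complex_vector_space)"
  by (simp only: diff_conv_add_uminus scaleC_add_right scaleC_minus_right)

lemma scaleC_diff_left: "(a - b) *\<^sub>C x = a *\<^sub>C x - b *\<^sub>C (x::'a::complex_vector_space)"
  by (simp only: diff_conv_add_uminus scaleC_add_left scaleC_minus_left)

lemma cinner_zero_left [simp]: "cinner 0 (y::'a::complex_inner) = 0"
  using cinner_add_left[of 0 0 y] by simp

lemma cinner_zero_right [simp]: "cinner (x::'a::complex_inner) 0 = 0"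
  using cinner_commute[of x 0] by simp

lemma cinner_add_right: "cinner (x::'a::complex_inner) (y + z) = cinner x y + cinner x z"
  by (metis cinner_add_left cinner_commute complex_cnj_add)

lemma cinner_scaleC_right: "cinner (x::'a::complex_inner) (a *\<^sub>C y) = a * cinner x y"
  by (metis cinner_commute cinner_scaleC_left complex_cnj_cnj complex_cnj_mult)

lemma cinner_diff_left: "cinner (x - y) (z::'a::complex_inner) = cinner x z - cinner y z"
  using cinner_add_left[of "x - y" y z] by (simp add: algebra_simps)

lemma cinner_diff_right: "cinner x (y - z::'a::complex_inner) = cinner x y - cinner x z"
  using cinner_add_right[of x "y - z" z] by (simp add: algebra_simps)

lemma cinner_self_eq_norm: "cinner x (x::'a::complex_inner) = complex_of_real ((norm x)\<^sup>2)"
  using norm_eq_sqrt_cinner[of x] cinner_self_nonneg[of x] cinner_self_real[of x]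
  by (simp add: complex_eq_iff)

lemma norm_scaleC: "norm (a *\<^sub>C (x::'a::complex_inner)) = cmod a * norm x"
proof -
  have "complex_of_real ((norm (a *\<^sub>C x))\<^sup>2) = cinner (a *\<^sub>C x) (a *\<^sub>C x)"
    by (rule cinner_self_eq_norm[symmetric])
  also have "\<dots> = (cnj a * a) * cinner x x"
    by (simp add: cinner_scaleC_left cinner_scaleC_right)
  also have "cnj a * a = complex_of_real ((cmod a)\<^sup>2)"
    by (metis complex_norm_square mult.commute)
  finally have "(norm (a *\<^sub>C x))\<^sup>2 = (cmod a * norm x)\<^sup>2"
    by (simp only: cinner_self_eq_norm of_real_mult[symmetric] of_real_eq_iff power_mult_distrib)
  then show ?thesis by (simp add: power2_eq_iff_nonneg)
qed

lemma Re_cinner_le_norm: "Re (cinner x (y::'a::complex_inner)) \<le> norm x * norm y"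
proof (cases "x = 0 \<or> y = 0")
  case True then show ?thesis by auto
next
  case False
  then have "0 < norm x * norm y" by simp
  define a where "a = complex_of_real (norm y)"
  define b where "b = complex_of_real (norm x)"
  have "0 \<le> Re (cinner (a *\<^sub>C x - b *\<^sub>C y) (a *\<^sub>C x - b *\<^sub>C y))"
    by (rule cinner_self_nonneg)
  also have "\<dots> = 2 * (norm x * norm y) * (norm x * norm y - Re (cinner x y))"
    using cinner_commute[of y x]
    by (simp add: a_def b_def cinner_diff_left cinner_diff_right cinner_scaleC_left
        cinner_scaleC_right cinner_self_eq_norm[of x] cinner_self_eq_norm[of y] power2_eq_square
        algebra_simps)
  finally show ?thesis
    using \<open>0 < norm x * norm y\<close> by (simp add: zero_le_mult_iff)
qed

lemma norm_cinner_le: "cmod (cinner x (y::'a::complex_inner)) \<le> norm x * norm y"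
proof (cases "cinner x y = 0")
  case True then show ?thesis by simp
next
  case False
  define c where "c = cinner x y"
  define u where "u = cnj c / cmod c"
  have "cinner x (u *\<^sub>C y) = (c * cnj c) / cmod c"
    by (simp add: u_def c_def cinner_scaleC_right)
  also have "c * cnj c = complex_of_real (cmod c) * cmod c"
    by (metis complex_norm_square power2_eq_square of_real_mult)
  finally have "cinner x (u *\<^sub>C y) = complex_of_real (cmod (cinner x y))"
    using False by (simp add: c_def)
  then have "cmod (cinner x y) = Re (cinner x (u *\<^sub>C y))" by simp
  also have "\<dots> \<le> norm x * norm (u *\<^sub>C y)" by (rule Re_cinner_le_norm)
  also have "norm (u *\<^sub>C y) = norm y" using False by (simp add: norm_scaleC u_def c_def norm_divide)
  finally show ?thesis .
qed

lemma bounded_linear_scaleC: "bounded_linear (\<lambda>x::'a::complex_inner. c *\<^sub>C x)"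
  by (rule bounded_linear_intro[where K="cmod c"])
    (simp_all add: scaleC_add_right scaleR_eq_scaleC norm_scaleC mult.commute)

lemma bounded_linear_cinner_right: "bounded_linear (\<lambda>v::'a::complex_inner. cinner y v)"
proof (rule bounded_linear_intro[where K="norm y"])
  show "norm (cinner y v) \<le> norm v * norm y" for v :: 'a
    by (metis norm_cinner_le mult.commute)
qed (simp_all add: cinner_add_right scaleR_eq_scaleC cinner_scaleC_right scaleR_conv_of_real)

section \<open>Bounded operators and the Neumann series\<close>

lemma bounded_clinear_imp_bounded_linear: "bounded_clinear f \<Longrightarrow> bounded_linear f"
  by (simp add: bounded_clinear_def)

lemma bounded_clinear_scaleC: "bounded_clinear f \<Longrightarrow> f (c *\<^sub>C x) = c *\<^sub>C f x"
  by (simp add: bounded_clinear_def)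

lemma bounded_clinear_add: "bounded_clinear f \<Longrightarrow> f (x + y) = f x + f y"
  by (simp add: bounded_clinear_def bounded_linear.axioms(1) linear_add)

lemma bounded_clinear_diff: "bounded_clinear f \<Longrightarrow> f (x - y) = f x - f y"
  by (simp add: bounded_clinear_def bounded_linear.axioms(1) linear_diff)

lemma bounded_clinear_ident: "bounded_clinear (\<lambda>x::'a::complex_inner. x)"
  by (simp add: bounded_clinear_def bounded_linear_ident)

lemma bounded_clinear_compose:
  "bounded_clinear f \<Longrightarrow> bounded_clinear g \<Longrightarrow> bounded_clinear (\<lambda>x. f (g x))"
  unfolding bounded_clinear_def using bounded_linear_compose by auto

lemma bounded_clinear_sub:
  "bounded_clinear f \<Longrightarrow> bounded_clinear g \<Longrightarrow> bounded_clinear (\<lambda>x. f x - g x)"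
  unfolding bounded_clinear_def using bounded_linear_sub by (auto simp: scaleC_diff_right)

lemma bounded_clinear_const_scaleC: "bounded_clinear f \<Longrightarrow> bounded_clinear (\<lambda>x. c *\<^sub>C f x)"
  unfolding bounded_clinear_def
  using bounded_linear_compose[OF bounded_linear_scaleC[of c]] by (auto simp: mult.commute)

lemma bounded_clinear_scaleC_ident: "bounded_clinear (\<lambda>x::'a::complex_inner. c *\<^sub>C x)"
  using bounded_clinear_const_scaleC[OF bounded_clinear_ident] .

lemma bounded_clinear_funpow:
  fixes f :: "'a::complex_inner \<Rightarrow> 'a"
  assumes "bounded_clinear f"
  shows "bounded_clinear (f ^^ n)"
proof (induction n)
  case 0
  show ?case using bounded_clinear_ident by (simp add: id_def)
next
  case (Suc n)
  show ?case using bounded_clinear_compose[OF assms Suc.IH] by (simp add: o_def)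
qed

lemma onorm_scaleC_ident_le: "onorm (\<lambda>x::'a::complex_inner. c *\<^sub>C x) \<le> cmod c"
  by (rule onorm_bound) (auto simp: norm_scaleC)

lemma onorm_funpow_le:
  assumes "bounded_clinear (f::'a::complex_inner \<Rightarrow> 'a)"
  shows "onorm (f ^^ n) \<le> onorm f ^ n"
proof (induction n)
  case 0
  then show ?case using onorm_id_le by (simp add: id_def)
next
  case (Suc n)
  note bl = bounded_clinear_imp_bounded_linear
  have "onorm (f ^^ Suc n) \<le> onorm f * onorm (f ^^ n)"
    using onorm_compose[OF bl[OF assms] bl[OF bounded_clinear_funpow[OF assms]]] by simp
  also have "\<dots> \<le> onorm f * onorm f ^ n"
    using Suc onorm_pos_le[OF bl[OF assms]] by (simp add: mult_left_mono)
  finally show ?case by (simp only: power_Suc)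
qed

lemma norm_funpow_le:
  assumes "bounded_clinear (f::'a::complex_inner \<Rightarrow> 'a)"
  shows "norm ((f ^^ n) x) \<le> onorm f ^ n * norm x"
proof -
  have "norm ((f ^^ n) x) \<le> onorm (f ^^ n) * norm x"
    by (rule onorm[OF bounded_clinear_imp_bounded_linear[OF bounded_clinear_funpow[OF assms]]])
  also have "\<dots> \<le> onorm f ^ n * norm x"
    using onorm_funpow_le[OF assms] by (simp add: mult_right_mono)
  finally show ?thesis .
qed

definition is_op_inverse :: "('a::complex_inner \<Rightarrow> 'a) \<Rightarrow> ('a \<Rightarrow> 'a) \<Rightarrow> bool" where
  "is_op_inverse A R \<longleftrightarrow>
     bounded_clinear A \<and> bounded_clinear R \<and> (\<forall>x. R (A x) = x) \<and> (\<forall>x. A (R x) = x)"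

lemma op_invertible_iff: "op_invertible A \<longleftrightarrow> (\<exists>R. is_op_inverse A R)"
  by (auto simp: op_invertible_def is_op_inverse_def fun_eq_iff)

lemma is_op_inverseD:
  assumes "is_op_inverse A R"
  shows "bounded_clinear A" "bounded_clinear R" "\<And>x. R (A x) = x" "\<And>x. A (R x) = x"
  using assms by (auto simp: is_op_inverse_def)

lemma is_op_inverse_imp_inv_eq: "is_op_inverse A R \<Longrightarrow> inv A = R"
  unfolding is_op_inverse_def by (intro inv_unique_comp) (auto simp: fun_eq_iff)

lemma onorm_op_inverse_nonneg: "is_op_inverse A R \<Longrightarrow> 0 \<le> onorm R"
  by (intro onorm_pos_le bounded_clinear_imp_bounded_linear is_op_inverseD(2))

lemma is_op_inverse_const_scaleC:
  assumes "is_op_inverse A R" "c \<noteq> 0"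
  shows "is_op_inverse (\<lambda>x. c *\<^sub>C A x) (\<lambda>x. R ((1/c) *\<^sub>C x))"
  using is_op_inverseD[OF assms(1)] assms(2)
  by (auto simp: is_op_inverse_def bounded_clinear_const_scaleC
      bounded_clinear_compose[OF _ bounded_clinear_scaleC_ident])

lemma op_invertible_const_scaleC_iff:
  assumes "c \<noteq> 0"
  shows "op_invertible (\<lambda>x. c *\<^sub>C A x) \<longleftrightarrow> op_invertible A"
proof
  assume "op_invertible (\<lambda>x. c *\<^sub>C A x)"
  then obtain R where "is_op_inverse (\<lambda>x. c *\<^sub>C A x) R" by (auto simp: op_invertible_iff)
  from is_op_inverse_const_scaleC[OF this, of "1/c"] assms
  have "is_op_inverse A (\<lambda>x. R (c *\<^sub>C x))" by simp
  then show "op_invertible A" by (auto simp: op_invertible_iff)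
qed (use is_op_inverse_const_scaleC assms in \<open>auto simp: op_invertible_iff\<close>)

lemma is_op_inverse_scaleC_ident:
  assumes "c \<noteq> 0"
  shows "is_op_inverse (\<lambda>x::'a::complex_inner. c *\<^sub>C x) (\<lambda>x. (1/c) *\<^sub>C x)"
  using assms by (simp add: is_op_inverse_def bounded_clinear_scaleC_ident)

lemma onorm_op_inverse_le_if_bounded_below:
  assumes "is_op_inverse A R" "c > 0" "\<And>x. c * norm x \<le> norm (A x)"
  shows "onorm R \<le> 1 / c"
proof (rule onorm_bound)
  show "0 \<le> 1 / c" using assms(2) by simp
  show "norm (R y) \<le> 1 / c * norm y" for y
    using assms(3)[of "R y"] is_op_inverseD(4)[OF assms(1)] assms(2) by (simp add: field_simps)
qed

definition neumann_sum :: "('a::real_normed_vector \<Rightarrow> 'a) \<Rightarrow> 'a \<Rightarrow> 'a" where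
  "neumann_sum B x = (\<Sum>n. (B ^^ n) x)"

context
  fixes B :: "'a::chilbert_space \<Rightarrow> 'a"
  assumes B: "bounded_clinear B" and onorm_B: "onorm B < 1"
begin

lemma neumann_sum_sums: "(\<lambda>n. (B ^^ n) x) sums neumann_sum B x"
  and norm_neumann_sum_le: "norm (neumann_sum B x) \<le> norm x / (1 - onorm B)"
proof -
  have geometric: "(\<lambda>n. onorm B ^ n * norm x) sums (norm x / (1 - onorm B))"
    using sums_mult2[OF geometric_sums, of "onorm B" "norm x"] onorm_B
      onorm_pos_le[OF bounded_clinear_imp_bounded_linear[OF B]] by simp
  have summable_norms: "summable (\<lambda>n. norm ((B ^^ n) x))"
    using geometric norm_funpow_le[OF B] by (intro summable_comparison_test[OF _ sums_summable]) auto
  then show "(\<lambda>n. (B ^^ n) x) sums neumann_sum B x"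
    by (simp add: neumann_sum_def summable_norm_cancel summable_sums)
  have "norm (neumann_sum B x) \<le> (\<Sum>n. norm ((B ^^ n) x))"
    unfolding neumann_sum_def by (rule summable_norm[OF summable_norms])
  also have "\<dots> \<le> (\<Sum>n. onorm B ^ n * norm x)"
    using geometric norm_funpow_le[OF B] summable_norms by (intro suminf_le) (auto simp: sums_iff)
  also have "\<dots> = norm x / (1 - onorm B)"
    using geometric by (simp add: sums_iff)
  finally show "norm (neumann_sum B x) \<le> norm x / (1 - onorm B)" .
qed

lemma bounded_clinear_neumann_sum: "bounded_clinear (neumann_sum B)"
proof -
  have add: "neumann_sum B (x + y) = neumann_sum B x + neumann_sum B y" for x y
    using sums_add[OF neumann_sum_sums[of x] neumann_sum_sums[of y]] neumann_sum_sums[of "x + y"]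
    by (simp add: bounded_clinear_add[OF bounded_clinear_funpow[OF B]] sums_unique2)
  have scaleC: "neumann_sum B (c *\<^sub>C x) = c *\<^sub>C neumann_sum B x" for c x
    using bounded_linear.sums[OF bounded_linear_scaleC neumann_sum_sums[of x], of c]
      neumann_sum_sums[of "c *\<^sub>C x"]
    by (simp add: bounded_clinear_scaleC[OF bounded_clinear_funpow[OF B]] sums_unique2)
  have "bounded_linear (neumann_sum B)"
    by (rule bounded_linear_intro[where K="1 / (1 - onorm B)"])
      (use add scaleC norm_neumann_sum_le in \<open>simp_all add: scaleR_eq_scaleC\<close>)
  with scaleC show ?thesis by (simp add: bounded_clinear_def)
qed

lemma is_op_inverse_neumann_sum: "is_op_inverse (\<lambda>x. x - B x) (neumann_sum B)"
proof -
  have shift: "(\<lambda>n. (B ^^ Suc n) x) sums (neumann_sum B x - x)" for x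
    using neumann_sum_sums[of x] by (subst sums_Suc_iff) simp
  have "(\<lambda>n. (B ^^ Suc n) x) sums B (neumann_sum B x)" for x
    using bounded_linear.sums[OF bounded_clinear_imp_bounded_linear[OF B] neumann_sum_sums] by simp
  with shift have B_sum: "B (neumann_sum B x) = neumann_sum B x - x" for x
    using sums_unique2 by blast
  have "(\<lambda>n. (B ^^ Suc n) x) sums neumann_sum B (B x)" for x
    using neumann_sum_sums[of "B x"] by (simp add: funpow_swap1)
  with shift have sum_B: "neumann_sum B (B x) = neumann_sum B x - x" for x
    using sums_unique2 by blast
  show ?thesis
    using bounded_clinear_neumann_sum B
    by (simp add: is_op_inverse_def bounded_clinear_sub[OF bounded_clinear_ident]
        bounded_clinear_diff B_sum sum_B)
qed

end

lemma is_op_inverse_perturb: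
  fixes A R E :: "'a::chilbert_space \<Rightarrow> 'a"
  assumes AR: "is_op_inverse A R" and E: "bounded_clinear E" and small: "onorm E * onorm R < 1"
  defines "B \<equiv> \<lambda>x. R (E x)"
  shows "is_op_inverse (\<lambda>x. A x - E x) (\<lambda>y. neumann_sum B (R y))"
    and "onorm (\<lambda>y. neumann_sum B (R y)) \<le> onorm R / (1 - onorm E * onorm R)"
proof -
  note D = is_op_inverseD[OF AR]
  have B: "bounded_clinear B" unfolding B_def by (rule bounded_clinear_compose[OF D(2) E])
  have onorm_B: "onorm B \<le> onorm E * onorm R"
    unfolding B_def using onorm_compose[OF bounded_clinear_imp_bounded_linear[OF D(2)]
      bounded_clinear_imp_bounded_linear[OF E]] by (simp add: o_def mult.commute)
  with small have onorm_B1: "onorm B < 1" by simp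
  note N = is_op_inverseD[OF is_op_inverse_neumann_sum[OF B onorm_B1]]
  show "is_op_inverse (\<lambda>x. A x - E x) (\<lambda>y. neumann_sum B (R y))"
  proof (unfold is_op_inverse_def, intro conjI allI)
    show "bounded_clinear (\<lambda>x. A x - E x)" by (rule bounded_clinear_sub[OF D(1) E])
    show "bounded_clinear (\<lambda>y. neumann_sum B (R y))" by (rule bounded_clinear_compose[OF N(2) D(2)])
    show "neumann_sum B (R (A x - E x)) = x" for x
      using N(3)[of x] by (simp add: bounded_clinear_diff[OF D(2)] D(3) B_def)
    show "A (neumann_sum B (R y)) - E (neumann_sum B (R y)) = y" for y
      using arg_cong[OF N(4)[of "R y"], of A]
      by (simp add: bounded_clinear_diff[OF D(1)] B_def D(4))
  qed
  show "onorm (\<lambda>y. neumann_sum B (R y)) \<le> onorm R / (1 - onorm E * onorm R)"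
  proof (rule onorm_bound)
    have "0 \<le> onorm R" by (rule onorm_op_inverse_nonneg[OF AR])
    then show "0 \<le> onorm R / (1 - onorm E * onorm R)" using small by simp
    show "norm (neumann_sum B (R y)) \<le> onorm R / (1 - onorm E * onorm R) * norm y" for y
    proof -
      have "norm (neumann_sum B (R y)) \<le> norm (R y) / (1 - onorm B)"
        by (rule norm_neumann_sum_le[OF B onorm_B1])
      also have "\<dots> \<le> (onorm R * norm y) / (1 - onorm E * onorm R)"
        using onorm[OF bounded_clinear_imp_bounded_linear[OF D(2)], of y] onorm_B small
          onorm_op_inverse_nonneg[OF AR]
        by (intro frac_le) auto
      finally show ?thesis by simp
    qed
  qed
qed

lemma op_invertible_perturb:
  fixes A R E :: "'a::chilbert_space \<Rightarrow> 'a"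
  assumes "is_op_inverse A R" "bounded_clinear E" "onorm E * onorm R < 1"
  shows "op_invertible (\<lambda>x. A x - E x)"
  using is_op_inverse_perturb(1)[OF assms] unfolding op_invertible_iff by blast

lemma is_op_inverse_minus_scaleC:
  fixes A R :: "'a::chilbert_space \<Rightarrow> 'a"
  assumes AR: "is_op_inverse A R" and small: "cmod h * onorm R < 1"
  defines "R' \<equiv> \<lambda>y. neumann_sum (\<lambda>x. R (h *\<^sub>C x)) (R y)"
  shows "is_op_inverse (\<lambda>x. A x - h *\<^sub>C x) R'"
    and "onorm R' \<le> onorm R / (1 - cmod h * onorm R)"
    and "(\<lambda>n. h ^ n *\<^sub>C (R ^^ Suc n) y) sums R' y"
proof -
  note R = is_op_inverseD(2)[OF AR]
  have "onorm (\<lambda>x::'a. h *\<^sub>C x) * onorm R \<le> cmod h * onorm R"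
    by (rule mult_right_mono[OF onorm_scaleC_ident_le onorm_op_inverse_nonneg[OF AR]])
  note E_small = this order.strict_trans1[OF this small]
  show "is_op_inverse (\<lambda>x. A x - h *\<^sub>C x) R'"
    using is_op_inverse_perturb(1)[OF AR bounded_clinear_scaleC_ident E_small(2)]
    by (simp add: R'_def)
  have "onorm R' \<le> onorm R / (1 - onorm (\<lambda>x::'a. h *\<^sub>C x) * onorm R)"
    using is_op_inverse_perturb(2)[OF AR bounded_clinear_scaleC_ident E_small(2)]
    by (simp add: R'_def)
  also have "\<dots> \<le> onorm R / (1 - cmod h * onorm R)"
    using E_small small onorm_op_inverse_nonneg[OF AR] by (intro divide_left_mono) auto
  finally show "onorm R' \<le> onorm R / (1 - cmod h * onorm R)" .
  have B: "bounded_clinear (\<lambda>x. R (h *\<^sub>C x))"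
    by (rule bounded_clinear_compose[OF R bounded_clinear_scaleC_ident])
  have "onorm (\<lambda>x. R (h *\<^sub>C x)) \<le> onorm R * onorm (\<lambda>x::'a. h *\<^sub>C x)"
    using onorm_compose[OF bounded_clinear_imp_bounded_linear[OF R] bounded_linear_scaleC]
    by (simp add: o_def)
  with E_small(2) have "onorm (\<lambda>x. R (h *\<^sub>C x)) < 1" by (simp add: mult.commute)
  moreover have "((\<lambda>x. R (h *\<^sub>C x)) ^^ n) z = h ^ n *\<^sub>C (R ^^ n) z" for n z
    by (induction n) (simp_all add: bounded_clinear_scaleC[OF R] mult.commute)
  ultimately show "(\<lambda>n. h ^ n *\<^sub>C (R ^^ Suc n) y) sums R' y"
    using neumann_sum_sums[OF B, of "R y"] by (simp add: R'_def funpow_swap1)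
qed

lemma op_invertible_minus_scaleC:
  fixes A R :: "'a::chilbert_space \<Rightarrow> 'a"
  assumes "is_op_inverse A R" "cmod h * onorm R < 1"
  shows "op_invertible (\<lambda>x. A x - h *\<^sub>C x)"
  using is_op_inverse_minus_scaleC(1)[OF assms] unfolding op_invertible_iff by blast

lemma onorm_inverse_ge_if_not_invertible:
  fixes A R :: "'a::chilbert_space \<Rightarrow> 'a"
  assumes "is_op_inverse A R" "\<not> op_invertible (\<lambda>x. A x - h *\<^sub>C x)"
  shows "1 / cmod h \<le> onorm R"
proof -
  have "1 \<le> cmod h * onorm R" using op_invertible_minus_scaleC[OF assms(1)] assms(2) by force
  then show ?thesis by (simp add: divide_le_eq mult.commute onorm_op_inverse_nonneg[OF assms(1)])
qed

section \<open>The spectrum\<close>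

lemma op_invertible_scaleC_minus_if_onorm_less:
  fixes P :: "'a::chilbert_space \<Rightarrow> 'a"
  assumes P: "bounded_clinear P" and big: "onorm P < cmod l"
  shows "op_invertible (\<lambda>x. l *\<^sub>C x - P x)"
proof -
  have l: "l \<noteq> 0" using big onorm_pos_le[OF bounded_clinear_imp_bounded_linear[OF P]] by auto
  have "onorm P * onorm (\<lambda>x::'a. (1/l) *\<^sub>C x) \<le> onorm P * cmod (1/l)"
    by (rule mult_left_mono[OF onorm_scaleC_ident_le onorm_pos_le])
      (rule bounded_clinear_imp_bounded_linear[OF P])
  also have "\<dots> < 1" using big l by (simp add: norm_divide field_simps)
  finally show ?thesis by (rule op_invertible_perturb[OF is_op_inverse_scaleC_ident[OF l] P])
qed

lemma op_spectrum_subset_cball: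
  fixes P :: "'a::chilbert_space \<Rightarrow> 'a"
  assumes "bounded_clinear P"
  shows "op_spectrum P \<subseteq> cball 0 (onorm P)"
  using op_invertible_scaleC_minus_if_onorm_less[OF assms] by (force simp: op_spectrum_def)

lemma closed_op_spectrum:
  fixes P :: "'a::chilbert_space \<Rightarrow> 'a"
  assumes P: "bounded_clinear P"
  shows "closed (op_spectrum P)"
  unfolding closed_def
proof (rule openI)
  fix l assume "l \<in> - op_spectrum P"
  then obtain R where R: "is_op_inverse (\<lambda>x. l *\<^sub>C x - P x) R"
    by (auto simp: op_spectrum_def op_invertible_iff)
  define e where "e = 1 / (onorm R + 1)"
  have R0: "0 \<le> onorm R" by (rule onorm_op_inverse_nonneg[OF R])
  have "ball l e \<subseteq> - op_spectrum P"
  proof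
    fix l' assume "l' \<in> ball l e"
    then have "cmod (l - l') * onorm R \<le> e * onorm R"
      using R0 by (simp add: dist_norm mult_right_mono)
    also have "e * onorm R < 1" using R0 by (simp add: e_def field_simps)
    finally have "op_invertible (\<lambda>x. (l *\<^sub>C x - P x) - (l - l') *\<^sub>C x)"
      by (rule op_invertible_minus_scaleC[OF R])
    then show "l' \<in> - op_spectrum P"
      by (simp add: op_spectrum_def scaleC_diff_left algebra_simps)
  qed
  moreover have "e > 0" using R0 by (simp add: e_def)
  ultimately show "\<exists>e>0. ball l e \<subseteq> - op_spectrum P" by blast
qed

lemma compact_op_spectrum:
  fixes P :: "'a::chilbert_space \<Rightarrow> 'a"
  assumes "bounded_clinear P"
  shows "compact (op_spectrum P)"
  using closed_op_spectrum[OF assms] op_spectrum_subset_cball[OF assms]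
  by (metis bounded_cball bounded_subset compact_eq_bounded_closed)

lemma zero_in_op_spectrum: "\<not> op_invertible P \<Longrightarrow> 0 \<in> op_spectrum P"
  using op_invertible_const_scaleC_iff[of "-1" P]
  by (simp add: op_spectrum_def uminus_eq_scaleC[symmetric])

lemma op_invertible_one_minus_scaleC_shift_iff:
  fixes P :: "'a::complex_inner \<Rightarrow> 'a"
  assumes "q \<noteq> 0"
  shows "op_invertible (\<lambda>x. (x - q *\<^sub>C P x) - l *\<^sub>C x) \<longleftrightarrow> (1 - l) / q \<notin> op_spectrum P"
proof -
  have "(\<lambda>x. (x - q *\<^sub>C P x) - l *\<^sub>C x) = (\<lambda>x. q *\<^sub>C (((1 - l) / q) *\<^sub>C x - P x))"
  proof
    fix x
    have "q *\<^sub>C (((1 - l) / q) *\<^sub>C x - P x) = (q * ((1 - l) / q)) *\<^sub>C x - q *\<^sub>C P x"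
      by (simp add: scaleC_diff_right)
    also have "q * ((1 - l) / q) = 1 - l" using assms by simp
    finally show "(x - q *\<^sub>C P x) - l *\<^sub>C x = q *\<^sub>C (((1 - l) / q) *\<^sub>C x - P x)"
      by (simp add: scaleC_diff_left)
  qed
  then show ?thesis
    by (simp add: op_invertible_const_scaleC_iff[OF assms] op_spectrum_def)
qed

lemma op_spectrum_iff_not_invertible_minus:
  "l \<in> op_spectrum T \<longleftrightarrow> \<not> op_invertible (\<lambda>x. T x - l *\<^sub>C x)"
proof -
  have "(\<lambda>x. (-1) *\<^sub>C (l *\<^sub>C x - T x)) = (\<lambda>x. T x - l *\<^sub>C x)"
    by (simp add: fun_eq_iff scaleC_diff_right scaleC_minus_left uminus_eq_scaleC[symmetric])
  then show ?thesis
    using op_invertible_const_scaleC_iff[of "-1" "\<lambda>x. l *\<^sub>C x - T x"] by (simp add: op_spectrum_def)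
qed

lemma op_invertible_iff_zero_notin_op_spectrum: "op_invertible T \<longleftrightarrow> 0 \<notin> op_spectrum T"
  by (simp add: op_spectrum_iff_not_invertible_minus)

lemma not_op_invertible_zero:
  fixes P :: "'a::complex_inner \<Rightarrow> 'a"
  assumes "bounded_clinear P" "\<not> op_invertible P"
  shows "\<not> op_invertible (\<lambda>x::'a. 0)"
proof
  assume "op_invertible (\<lambda>x::'a. 0)"
  then obtain R where "is_op_inverse (\<lambda>x::'a. 0) R" by (auto simp: op_invertible_iff)
  then have trivial: "x = R 0" for x :: 'a by (metis is_op_inverseD(3))
  then have "is_op_inverse P P" using assms(1) by (simp add: is_op_inverse_def) (metis trivial)
  with assms(2) show False by (auto simp: op_invertible_iff)
qed

lemma op_spectrum_one_minus_scaleC: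
  fixes P :: "'a::chilbert_space \<Rightarrow> 'a"
  assumes P: "bounded_clinear P" and not_invertible: "\<not> op_invertible P"
  shows "op_spectrum (\<lambda>x. x - q *\<^sub>C P x) = (\<lambda>\<mu>. 1 - q * \<mu>) ` op_spectrum P"
proof (cases "q = 0")
  case True
  have "l \<in> op_spectrum (\<lambda>x::'a. x) \<longleftrightarrow> l = 1" for l
  proof (cases "l = 1")
    case True
    then show ?thesis by (simp add: op_spectrum_def) (rule not_op_invertible_zero[OF assms])
  next
    case False
    then have "op_invertible (\<lambda>x::'a. (l - 1) *\<^sub>C x)"
      using is_op_inverse_scaleC_ident[of "l - 1"] by (auto simp: op_invertible_iff)
    with False show ?thesis by (simp add: op_spectrum_def scaleC_diff_left)
  qed
  moreover have "op_spectrum P \<noteq> {}" using zero_in_op_spectrum[OF not_invertible] by blast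
  ultimately show ?thesis using True by auto
next
  case False
  have shift: "l \<in> op_spectrum (\<lambda>x. x - q *\<^sub>C P x) \<longleftrightarrow> (1 - l) / q \<in> op_spectrum P" for l
    using op_invertible_one_minus_scaleC_shift_iff[OF False]
    by (simp add: op_spectrum_iff_not_invertible_minus)
  show ?thesis
  proof (intro set_eqI iffI)
    fix l assume "l \<in> op_spectrum (\<lambda>x. x - q *\<^sub>C P x)"
    moreover have "l = 1 - q * ((1 - l) / q)" using False by simp
    ultimately show "l \<in> (\<lambda>\<mu>. 1 - q * \<mu>) ` op_spectrum P" by (simp add: shift rev_image_eqI)
  next
    fix l assume "l \<in> (\<lambda>\<mu>. 1 - q * \<mu>) ` op_spectrum P"
    then obtain \<mu> where "\<mu> \<in> op_spectrum P" "l = 1 - q * \<mu>" by blast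
    then show "l \<in> op_spectrum (\<lambda>x. x - q *\<^sub>C P x)" using False by (simp add: shift)
  qed
qed

section \<open>Normal operators\<close>

lemma normal_op_adjoint:
  assumes "normal_op T"
  shows "\<exists>Q. bounded_clinear Q \<and> (\<forall>x y. cinner (T x) y = cinner x (Q y)) \<and> (\<forall>x. T (Q x) = Q (T x))"
  using assms unfolding normal_op_def is_adjoint_def by (metis comp_apply)

lemma normal_op_one_minus_scaleC:
  assumes "normal_op P"
  shows "normal_op (\<lambda>x. x - q *\<^sub>C P x)"
proof -
  have P: "bounded_clinear P" using assms by (simp add: normal_op_def)
  obtain Q where Q: "bounded_clinear Q"
    and adj: "\<And>x y. cinner (P x) y = cinner x (Q y)" and comm: "\<And>x. P (Q x) = Q (P x)"
    using normal_op_adjoint[OF assms] by blast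
  let ?Q' = "\<lambda>x. x - cnj q *\<^sub>C Q x"
  have "bounded_clinear (\<lambda>x. x - q *\<^sub>C P x)" "bounded_clinear ?Q'"
    by (simp_all add: bounded_clinear_sub bounded_clinear_ident bounded_clinear_const_scaleC P Q)
  moreover have "is_adjoint (\<lambda>x. x - q *\<^sub>C P x) ?Q'"
    by (simp add: is_adjoint_def cinner_diff_left cinner_diff_right cinner_scaleC_left
        cinner_scaleC_right adj)
  moreover have "(\<lambda>x. x - q *\<^sub>C P x) \<circ> ?Q' = ?Q' \<circ> (\<lambda>x. x - q *\<^sub>C P x)"
    by (simp add: fun_eq_iff bounded_clinear_diff[OF P] bounded_clinear_diff[OF Q]
        bounded_clinear_scaleC[OF P] bounded_clinear_scaleC[OF Q] scaleC_diff_right comm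
        mult.commute algebra_simps)
  ultimately show ?thesis by (auto simp: normal_op_def)
qed

lemma normal_op_compose_self:
  assumes "normal_op T"
  shows "normal_op (T \<circ> T)"
proof -
  have T: "bounded_clinear T" using assms by (simp add: normal_op_def)
  obtain Q where Q: "bounded_clinear Q"
    and adj: "\<And>x y. cinner (T x) y = cinner x (Q y)" and comm: "\<And>x. T (Q x) = Q (T x)"
    using normal_op_adjoint[OF assms] by blast
  show ?thesis
    unfolding normal_op_def is_adjoint_def
    by (intro conjI exI[of _ "Q \<circ> Q"])
      (auto simp: bounded_clinear_compose[OF T T] bounded_clinear_compose[OF Q Q] o_def adj comm)
qed

lemma normal_op_norm_square_le:
  assumes "normal_op T"
  shows "(norm (T w))\<^sup>2 \<le> norm w * norm (T (T w))"
proof -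
  obtain Q where adj: "\<And>x y. cinner (T x) y = cinner x (Q y)" and comm: "\<And>x. T (Q x) = Q (T x)"
    using normal_op_adjoint[OF assms] by blast
  have norm_Q: "norm (Q z) = norm (T z)" for z
  proof -
    have "complex_of_real ((norm (Q z))\<^sup>2) = cinner (T (Q z)) z"
      by (simp add: cinner_self_eq_norm adj)
    also have "\<dots> = cnj (cinner z (Q (T z)))"
      by (simp add: comm cinner_commute[of "Q (T z)"])
    also have "\<dots> = complex_of_real ((norm (T z))\<^sup>2)"
      by (simp add: adj[symmetric] cinner_self_eq_norm)
    finally have "(norm (Q z))\<^sup>2 = (norm (T z))\<^sup>2" by (simp only: of_real_eq_iff)
    then show ?thesis by (simp add: power2_eq_iff_nonneg)
  qed
  have "complex_of_real ((norm (T w))\<^sup>2) = cinner w (Q (T w))"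
    by (simp only: cinner_self_eq_norm[symmetric] adj)
  then have "(norm (T w))\<^sup>2 = Re (cinner w (Q (T w)))"
    by (metis Re_complex_of_real)
  also have "\<dots> \<le> norm w * norm (Q (T w))"
    by (rule Re_cinner_le_norm)
  finally show ?thesis by (simp add: norm_Q)
qed

lemma onorm_inverse_square_le:
  fixes T S :: "'a::complex_inner \<Rightarrow> 'a"
  assumes N: "normal_op T" and TS: "is_op_inverse T S"
  shows "(onorm S)\<^sup>2 \<le> onorm (S \<circ> S)"
proof -
  note D = is_op_inverseD[OF TS]
  have bl: "bounded_linear (S \<circ> S)"
    using bounded_clinear_compose[OF D(2) D(2)] by (simp add: o_def bounded_clinear_imp_bounded_linear)
  define c where "c = onorm (S \<circ> S)"
  have c: "0 \<le> c" unfolding c_def by (rule onorm_pos_le[OF bl])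
  have "norm (S y) \<le> sqrt c * norm y" for y
  proof -
    have "(norm (S y))\<^sup>2 \<le> norm (S (S y)) * norm y"
      using normal_op_norm_square_le[OF N, of "S (S y)"] by (simp add: D(4))
    also have "\<dots> \<le> c * norm y * norm y"
      using onorm[OF bl, of y] by (simp add: c_def mult_right_mono)
    also have "\<dots> = (sqrt c * norm y)\<^sup>2"
      using c by (simp add: power_mult_distrib power2_eq_square)
    finally show ?thesis by (rule power2_le_imp_le) (simp add: c)
  qed
  then have "onorm S \<le> sqrt c" by (intro onorm_bound) (use c in auto)
  then have "(onorm S)\<^sup>2 \<le> (sqrt c)\<^sup>2"
    using onorm_op_inverse_nonneg[OF TS] by (intro power_mono)
  then show ?thesis using c by (simp add: c_def)
qed

lemma onorm_inverse_pow2_le: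
  fixes T S :: "'a::complex_inner \<Rightarrow> 'a"
  assumes "normal_op T" "is_op_inverse T S"
  shows "onorm S ^ (2 ^ k) \<le> onorm (S ^^ (2 ^ k))"
  using assms
proof (induction k arbitrary: T S)
  case 0
  then show ?case by simp
next
  case (Suc k)
  have square: "is_op_inverse (T \<circ> T) (S \<circ> S)"
    using is_op_inverseD[OF Suc.prems(2)]
    by (simp add: is_op_inverse_def bounded_clinear_compose o_def)
  have "onorm S ^ (2 ^ Suc k) = ((onorm S)\<^sup>2) ^ (2 ^ k)" by (simp add: power_mult)
  also have "\<dots> \<le> (onorm (S \<circ> S)) ^ (2 ^ k)"
    using onorm_inverse_square_le[OF Suc.prems] onorm_op_inverse_nonneg[OF Suc.prems(2)]
    by (intro power_mono) auto
  also have "\<dots> \<le> onorm ((S \<circ> S) ^^ (2 ^ k))"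
    by (rule Suc.IH[OF normal_op_compose_self[OF Suc.prems(1)] square])
  also have "S \<circ> S = S ^^ 2" by (simp add: numeral_2_eq_2)
  then have "(S \<circ> S) ^^ (2 ^ k) = S ^^ (2 ^ Suc k)" by (simp only: funpow_mult power_Suc)
  finally show ?case .
qed

section \<open>The norm of the inverse of a normal operator\<close>

lemma norm_power_series_coeff_le:
  fixes g :: "complex \<Rightarrow> complex"
  assumes sums: "\<And>w. w \<in> ball 0 r \<Longrightarrow> (\<lambda>n. c n * w ^ n) sums g w" and r: "0 < r"
    and hol: "g holomorphic_on ball 0 d" and \<rho>: "0 < \<rho>" "\<rho> < d"
    and bound: "\<And>l. cmod l = \<rho> \<Longrightarrow> cmod (g l) \<le> M"
  shows "cmod (c n) \<le> M / \<rho> ^ n"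
proof -
  have "g has_fps_expansion Abs_fps c"
    unfolding has_fps_expansion_def
  proof
    have "summable (\<lambda>n. c n * complex_of_real (r / 2) ^ n)"
      using sums[of "complex_of_real (r / 2)"] r by (auto simp: sums_iff)
    then have "ereal (r / 2) \<le> conv_radius c"
      using conv_radius_geI[of c "complex_of_real (r / 2)"] r by simp
    then show "0 < fps_conv_radius (Abs_fps c)"
      using r by (simp add: fps_conv_radius_def) (metis ereal_less(2) half_gt_zero order_less_le_trans)
    show "\<forall>\<^sub>F z in nhds 0. eval_fps (Abs_fps c) z = g z"
      unfolding eventually_nhds
      by (rule exI[of _ "ball 0 r"]) (use r sums in \<open>auto simp: eval_fps_def sums_iff\<close>)
  qed
  then have "cmod (c n) = norm ((deriv ^^ n) g 0) / fact n"
    using fps_nth_fps_expansion by (fastforce simp: norm_divide)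
  also have "\<dots> \<le> (fact n * M / \<rho> ^ n) / fact n"
    using hol \<rho> bound
    by (intro divide_right_mono Cauchy_inequality holomorphic_on_subset[OF hol]
        continuous_on_subset[OF holomorphic_on_imp_continuous_on[OF hol]]) auto
  finally show ?thesis by simp
qed

lemma le_one_if_pow2_bounded:
  fixes t C :: real
  assumes "\<And>k. t ^ (2 ^ k) \<le> C"
  shows "t \<le> 1"
proof (rule ccontr)
  assume "\<not> t \<le> 1"
  then have t: "0 < t - 1" by simp
  obtain k :: nat where "C / (t - 1) < k" using reals_Archimedean2 by blast
  then have "C < real k * (t - 1)" using t by (simp add: field_simps)
  also have "\<dots> < 2 ^ k * (t - 1)"
    using t less_exp[of k] by (intro mult_strict_right_mono) (simp_all flip: of_nat_less_iff)
  also have "\<dots> \<le> (1 + (t - 1)) ^ (2 ^ k)"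
    using Bernoulli_inequality[of "t - 1" "2 ^ k"] t by simp
  finally show False using assms[of k] by simp
qed

(* (T - l)^-1 rather than the usual (l - T)^-1, so that resolvent T 0 is the inverse of T. *)
definition resolvent :: "('a::complex_inner \<Rightarrow> 'a) \<Rightarrow> complex \<Rightarrow> 'a \<Rightarrow> 'a" where
  "resolvent T l = inv (\<lambda>x. T x - l *\<^sub>C x)"

context
  fixes T :: "'a::chilbert_space \<Rightarrow> 'a" and d :: real
  assumes invertible_near_0: "\<And>l. cmod l < d \<Longrightarrow> op_invertible (\<lambda>x. T x - l *\<^sub>C x)"
begin

lemma is_op_inverse_resolvent:
  assumes "cmod l < d"
  shows "is_op_inverse (\<lambda>x. T x - l *\<^sub>C x) (resolvent T l)"
  using invertible_near_0[OF assms] is_op_inverse_imp_inv_eq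
  by (fastforce simp: op_invertible_iff resolvent_def)

lemma resolvent_expansion:
  assumes "cmod l < d" and small: "cmod h * onorm (resolvent T l) < 1"
  shows "(\<lambda>n. h ^ n *\<^sub>C (resolvent T l ^^ Suc n) y) sums resolvent T (l + h) y"
    and "onorm (resolvent T (l + h)) \<le> onorm (resolvent T l) / (1 - cmod h * onorm (resolvent T l))"
proof -
  note inverse = is_op_inverse_minus_scaleC[OF is_op_inverse_resolvent[OF assms(1)] small]
  have "(\<lambda>x. T x - l *\<^sub>C x - h *\<^sub>C x) = (\<lambda>x. T x - (l + h) *\<^sub>C x)"
    by (simp add: fun_eq_iff scaleC_add_left algebra_simps)
  then have "resolvent T (l + h) = (\<lambda>y. neumann_sum (\<lambda>x. resolvent T l (h *\<^sub>C x)) (resolvent T l y))"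
    using is_op_inverse_imp_inv_eq[OF inverse(1)] by (simp add: resolvent_def)
  with inverse(2,3)
  show "(\<lambda>n. h ^ n *\<^sub>C (resolvent T l ^^ Suc n) y) sums resolvent T (l + h) y"
    and "onorm (resolvent T (l + h)) \<le> onorm (resolvent T l) / (1 - cmod h * onorm (resolvent T l))"
    by simp_all
qed

lemma resolvent_expansion_radius:
  assumes "cmod l < d" "cmod h < 1 / (2 * onorm (resolvent T l) + 1)"
  shows "cmod h * onorm (resolvent T l) < 1 / 2"
proof -
  have R: "0 \<le> onorm (resolvent T l)"
    by (rule onorm_op_inverse_nonneg[OF is_op_inverse_resolvent[OF assms(1)]])
  then have "cmod h * onorm (resolvent T l) \<le> onorm (resolvent T l) / (2 * onorm (resolvent T l) + 1)"
    using mult_right_mono[OF less_imp_le[OF assms(2)] R] by simp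
  also have "\<dots> < 1 / 2" using R by (simp add: field_simps)
  finally show ?thesis .
qed

lemma resolvent_bounded_on_circle:
  assumes "\<rho> < d"
  obtains B where "\<And>l. cmod l = \<rho> \<Longrightarrow> onorm (resolvent T l) \<le> B"
proof -
  define e where "e l = 1 / (2 * onorm (resolvent T l) + 1)" for l
  have R: "0 \<le> onorm (resolvent T l)" if "cmod l < d" for l
    by (rule onorm_op_inverse_nonneg[OF is_op_inverse_resolvent[OF that]])
  have local_bound: "onorm (resolvent T l') \<le> 2 * onorm (resolvent T l)"
    if l: "cmod l < d" and l': "l' \<in> ball l (e l)" for l l'
  proof -
    have small: "cmod (l' - l) * onorm (resolvent T l) < 1 / 2"
      using l' by (intro resolvent_expansion_radius[OF l]) (simp add: e_def dist_norm norm_minus_commute)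
    have "onorm (resolvent T (l + (l' - l)))
        \<le> onorm (resolvent T l) / (1 - cmod (l' - l) * onorm (resolvent T l))"
      using small by (intro resolvent_expansion(2)[OF l]) simp
    also have "\<dots> \<le> onorm (resolvent T l) / (1 / 2)"
      using small R[OF l] by (intro divide_left_mono) auto
    finally show ?thesis by simp
  qed
  have "0 < e l" if "l \<in> sphere 0 \<rho>" for l
    using R[of l] that assms by (simp add: e_def add_pos_nonneg)
  then have cover: "sphere 0 \<rho> \<subseteq> (\<Union>l\<in>sphere 0 \<rho>. ball l (e l))"
    by (meson UN_I centre_in_ball subsetI)
  obtain C where C: "C \<subseteq> sphere 0 \<rho>" "finite C" "sphere 0 \<rho> \<subseteq> (\<Union>l\<in>C. ball l (e l))"
    by (rule compactE_image[OF compact_sphere _ cover]) auto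
  have "onorm (resolvent T l') \<le> (\<Sum>l\<in>C. 2 * onorm (resolvent T l))" if "cmod l' = \<rho>" for l'
  proof -
    from that C(3) obtain l where l: "l \<in> C" "l' \<in> ball l (e l)" by auto
    have "cmod l < d" using l(1) C(1) assms by auto
    then have "onorm (resolvent T l') \<le> 2 * onorm (resolvent T l)" by (rule local_bound[OF _ l(2)])
    also have "\<dots> \<le> (\<Sum>l\<in>C. 2 * onorm (resolvent T l))"
      using l(1) C R assms by (intro member_le_sum) auto
    finally show ?thesis .
  qed
  then show thesis by (rule that)
qed

lemma cinner_resolvent_sums:
  assumes l: "cmod l < d" and w: "cmod (w - l) < 1 / (2 * onorm (resolvent T l) + 1)"
  shows "(\<lambda>n. cinner y ((resolvent T l ^^ Suc n) x) * (w - l) ^ n) sums cinner y (resolvent T w x)"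
proof -
  have "cmod (w - l) * onorm (resolvent T l) < 1 / 2" by (rule resolvent_expansion_radius[OF l w])
  then have "(\<lambda>n. (w - l) ^ n *\<^sub>C (resolvent T l ^^ Suc n) x) sums resolvent T w x"
    using resolvent_expansion(1)[OF l, of "w - l"] by simp
  from bounded_linear.sums[OF bounded_linear_cinner_right this, of y]
  show ?thesis by (simp add: cinner_scaleC_right mult.commute)
qed

lemma holomorphic_on_cinner_resolvent: "(\<lambda>l. cinner y (resolvent T l x)) holomorphic_on ball 0 d"
proof -
  define e where "e l = 1 / (2 * onorm (resolvent T l) + 1)" for l
  have "(\<lambda>l. cinner y (resolvent T l x)) holomorphic_on ball l (e l)" if "cmod l < d" for l
    using cinner_resolvent_sums[OF that]
    by (intro power_series_holomorphic) (simp add: e_def dist_norm norm_minus_commute)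
  then have "(\<lambda>l. cinner y (resolvent T l x)) holomorphic_on (\<Union>l\<in>ball 0 d. ball l (e l))"
    by (intro holomorphic_on_UN_open) auto
  moreover have "0 < e l" if "l \<in> ball 0 d" for l
    using onorm_op_inverse_nonneg[OF is_op_inverse_resolvent, of l] that
    by (simp add: e_def add_pos_nonneg)
  then have "ball 0 d \<subseteq> (\<Union>l\<in>ball 0 d. ball l (e l))"
    by (meson UN_I centre_in_ball subsetI)
  ultimately show ?thesis by (rule holomorphic_on_subset)
qed

lemma onorm_resolvent_power_le:
  assumes \<rho>: "0 < \<rho>" "\<rho> < d" and B: "\<And>l. cmod l = \<rho> \<Longrightarrow> onorm (resolvent T l) \<le> B"
  shows "onorm (resolvent T 0 ^^ Suc n) \<le> B / \<rho> ^ n"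
proof (rule onorm_bound)
  have B0: "0 \<le> B"
    using B[of \<rho>] onorm_op_inverse_nonneg[OF is_op_inverse_resolvent, of \<rho>] \<rho> by simp
  then show "0 \<le> B / \<rho> ^ n" using \<rho> by simp
  fix x
  define z where "z = (resolvent T 0 ^^ Suc n) x"
  have "cmod (cinner z ((resolvent T 0 ^^ Suc n) x)) \<le> norm z * B * norm x / \<rho> ^ n"
  proof (rule norm_power_series_coeff_le[OF _ _ holomorphic_on_cinner_resolvent \<rho>])
    show "0 < 1 / (2 * onorm (resolvent T 0) + 1)"
      using onorm_op_inverse_nonneg[OF is_op_inverse_resolvent, of 0] \<rho> by (simp add: add_pos_nonneg)
    show "(\<lambda>n. cinner z ((resolvent T 0 ^^ Suc n) x) * w ^ n) sums cinner z (resolvent T w x)"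
      if "w \<in> ball 0 (1 / (2 * onorm (resolvent T 0) + 1))" for w
      using cinner_resolvent_sums[of 0 w] that \<rho> by simp
  next
    fix l :: complex assume l: "cmod l = \<rho>"
    have "bounded_linear (resolvent T l)"
      using l \<rho> by (intro bounded_clinear_imp_bounded_linear is_op_inverseD(2)[OF is_op_inverse_resolvent]) auto
    have "cmod (cinner z (resolvent T l x)) \<le> norm z * norm (resolvent T l x)"
      by (rule norm_cinner_le)
    also have "\<dots> \<le> norm z * (onorm (resolvent T l) * norm x)"
      by (rule mult_left_mono[OF onorm[OF \<open>bounded_linear (resolvent T l)\<close>] norm_ge_zero])
    also have "\<dots> \<le> norm z * B * norm x"
      using B[OF l] by (simp add: mult_left_mono mult_right_mono mult.assoc)
    finally show "cmod (cinner z (resolvent T l x)) \<le> norm z * B * norm x" .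
  qed
  then have "norm z * norm z \<le> norm z * (B / \<rho> ^ n * norm x)"
    by (simp add: z_def cinner_self_eq_norm norm_mult power2_eq_square)
  moreover have "norm z \<le> B / \<rho> ^ n * norm x" if "z = 0"
    using that B0 \<rho> by simp
  ultimately show "norm ((resolvent T 0 ^^ Suc n) x) \<le> B / \<rho> ^ n * norm x"
    unfolding z_def by (meson mult_le_cancel_left_pos zero_less_norm_iff)
qed

end

lemma onorm_inverse_mult_le_one_if_invertible_near_0:
  fixes T S :: "'a::chilbert_space \<Rightarrow> 'a"
  assumes N: "normal_op T" and TS: "is_op_inverse T S"
    and invertible_near_0: "\<And>l. cmod l < d \<Longrightarrow> op_invertible (\<lambda>x. T x - l *\<^sub>C x)"
    and \<rho>: "0 < \<rho>" "\<rho> < d"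
  shows "onorm S * \<rho> \<le> 1"
proof -
  have S: "resolvent T 0 = S" using is_op_inverse_imp_inv_eq[OF TS] by (simp add: resolvent_def)
  obtain B where B: "\<And>l. cmod l = \<rho> \<Longrightarrow> onorm (resolvent T l) \<le> B"
    using resolvent_bounded_on_circle[OF invertible_near_0 \<rho>(2)] by blast
  have "(onorm S * \<rho>) ^ (2 ^ k) \<le> B * \<rho>" for k
  proof -
    have "onorm S ^ (2 ^ k) \<le> onorm (S ^^ Suc (2 ^ k - 1))"
      using onorm_inverse_pow2_le[OF N TS, of k] by simp
    also have "\<dots> \<le> B / \<rho> ^ (2 ^ k - 1)"
      using onorm_resolvent_power_le[OF invertible_near_0 \<rho> B, of "2 ^ k - 1"] by (simp only: S)
    finally have "onorm S ^ (2 ^ k) * \<rho> ^ (2 ^ k) \<le> B / \<rho> ^ (2 ^ k - 1) * \<rho> ^ (2 ^ k)"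
      by (rule mult_right_mono) (use \<rho> in simp)
    also have "\<dots> = B / \<rho> ^ (2 ^ k - 1) * (\<rho> ^ (2 ^ k - 1) * \<rho>)"
      by (simp flip: power_Suc2)
    also have "\<dots> = B * \<rho>"
      using \<rho> by simp
    finally show ?thesis by (simp only: power_mult_distrib)
  qed
  then show ?thesis by (rule le_one_if_pow2_bounded)
qed

theorem onorm_inverse_le_if_invertible_near_0:
  fixes T S :: "'a::chilbert_space \<Rightarrow> 'a"
  assumes N: "normal_op T" and TS: "is_op_inverse T S" and d: "0 < d"
    and invertible_near_0: "\<And>l. cmod l < d \<Longrightarrow> op_invertible (\<lambda>x. T x - l *\<^sub>C x)"
  shows "onorm S \<le> 1 / d"
proof (cases "onorm S = 0")
  case True
  with d show ?thesis by simp
next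
  case False
  then have S_pos: "0 < onorm S" using onorm_op_inverse_nonneg[OF TS] by simp
  have "\<rho> \<le> 1 / onorm S" if "0 < \<rho>" "\<rho> < d" for \<rho>
    using onorm_inverse_mult_le_one_if_invertible_near_0[OF N TS invertible_near_0 that] S_pos
    by (simp add: field_simps)
  then have "d \<le> 1 / onorm S" by (rule dense_le_bounded[OF d])
  with S_pos d show ?thesis by (simp add: field_simps)
qed

theorem onorm_inverse_normal_op_eq:
  fixes T S :: "'a::chilbert_space \<Rightarrow> 'a"
  assumes N: "normal_op T" and TS: "is_op_inverse T S" and nonempty: "op_spectrum T \<noteq> {}"
  shows "\<exists>\<zeta>0\<in>op_spectrum T. onorm S = 1 / cmod \<zeta>0 \<and> (\<forall>\<zeta>\<in>op_spectrum T. 1 / cmod \<zeta> \<le> onorm S)"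
proof -
  have "compact (op_spectrum T)"
    using N by (intro compact_op_spectrum) (simp add: normal_op_def)
  then obtain \<zeta>0 where \<zeta>0: "\<zeta>0 \<in> op_spectrum T" "\<And>\<zeta>. \<zeta> \<in> op_spectrum T \<Longrightarrow> cmod \<zeta>0 \<le> cmod \<zeta>"
    using continuous_attains_inf[OF _ nonempty, of cmod] by (auto intro: continuous_intros)
  have "0 \<notin> op_spectrum T"
    using TS by (auto simp: op_invertible_iff_zero_notin_op_spectrum[symmetric] op_invertible_iff)
  then have pos: "0 < cmod \<zeta>0" using \<zeta>0(1) by auto
  have lower: "1 / cmod \<zeta> \<le> onorm S" if "\<zeta> \<in> op_spectrum T" for \<zeta>
    using that by (intro onorm_inverse_ge_if_not_invertible[OF TS])
      (simp add: op_spectrum_iff_not_invertible_minus)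
  have "onorm S \<le> 1 / cmod \<zeta>0"
  proof (rule onorm_inverse_le_if_invertible_near_0[OF N TS pos])
    fix l assume "cmod l < cmod \<zeta>0"
    then have "l \<notin> op_spectrum T" using \<zeta>0(2) by (meson not_le)
    then show "op_invertible (\<lambda>x. T x - l *\<^sub>C x)" by (simp add: op_spectrum_iff_not_invertible_minus)
  qed
  with lower[OF \<zeta>0(1)] have "onorm S = 1 / cmod \<zeta>0" by simp
  with lower \<zeta>0(1) show ?thesis by blast
qed

section \<open>Nonnegative operators\<close>

lemma norm_scaleC_minus_ge_if_nonneg_op:
  fixes P :: "'a::complex_inner \<Rightarrow> 'a"
  assumes "nonneg_op P" and c: "c \<le> \<bar>Im l\<bar> \<or> c \<le> - Re l"
  shows "c * norm x \<le> norm (l *\<^sub>C x - P x)"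
proof -
  define a where "a = cinner (P x) x"
  have a: "Im a = 0" "0 \<le> Re a" using assms(1) by (auto simp: nonneg_op_def a_def)
  define z where "z = cnj l * complex_of_real ((norm x)\<^sup>2) - a"
  have "\<bar>Im z\<bar> = \<bar>Im l\<bar> * (norm x)\<^sup>2" "- Re l * (norm x)\<^sup>2 \<le> - Re z"
    using a by (simp_all add: z_def abs_mult)
  then have "c * (norm x)\<^sup>2 \<le> \<bar>Im z\<bar> \<or> c * (norm x)\<^sup>2 \<le> - Re z"
    using c by (auto intro: order_trans[OF mult_right_mono])
  then have "c * (norm x)\<^sup>2 \<le> cmod z"
    using abs_Im_le_cmod[of z] abs_Re_le_cmod[of z] by linarith
  also have "z = cinner (l *\<^sub>C x - P x) x"
    by (simp add: z_def a_def cinner_diff_left cinner_scaleC_left cinner_self_eq_norm)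
  also have "cmod \<dots> \<le> norm (l *\<^sub>C x - P x) * norm x"
    by (rule norm_cinner_le)
  finally show ?thesis
    by (cases "x = 0") (auto simp: power2_eq_square mult.assoc mult_le_cancel_right)
qed

lemma op_invertible_scaleC_minus_near:
  fixes P :: "'a::chilbert_space \<Rightarrow> 'a"
  assumes "op_invertible (\<lambda>x. l *\<^sub>C x - P x)" and c: "0 < c"
    and bounded_below: "\<And>x. c * norm x \<le> norm (l *\<^sub>C x - P x)" and near: "cmod (l - l') < c"
  shows "op_invertible (\<lambda>x. l' *\<^sub>C x - P x)"
proof -
  obtain R where R: "is_op_inverse (\<lambda>x. l *\<^sub>C x - P x) R"
    using assms(1) by (auto simp: op_invertible_iff)
  have "cmod (l - l') * onorm R \<le> cmod (l - l') * (1 / c)"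
    by (rule mult_left_mono[OF onorm_op_inverse_le_if_bounded_below[OF R c bounded_below] norm_ge_zero])
  also have "\<dots> < 1" using near c by (simp add: field_simps)
  finally have "op_invertible (\<lambda>x. (l *\<^sub>C x - P x) - (l - l') *\<^sub>C x)"
    by (rule op_invertible_minus_scaleC[OF R])
  then show ?thesis by (simp add: scaleC_diff_left algebra_simps)
qed

text \<open>Invertibility far out on the ray follows from the Neumann series; the uniform lower
bound then lets one walk back along the ray in steps of fixed length.\<close>

lemma op_invertible_if_bounded_below_on_ray:
  fixes P :: "'a::chilbert_space \<Rightarrow> 'a"
  assumes P: "bounded_clinear P" and c: "c > 0" and v: "cmod v = 1"
    and bounded_below: "\<And>t x. 0 \<le> t \<Longrightarrow> c * norm x \<le> norm ((l + complex_of_real t * v) *\<^sub>C x - P x)"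
  shows "op_invertible (\<lambda>x. l *\<^sub>C x - P x)"
proof -
  define M where "M = onorm P + cmod l + 1"
  define t where "t n = max 0 (M - real n * (c / 2))" for n :: nat
  have invertible: "op_invertible (\<lambda>x. (l + complex_of_real (t n) * v) *\<^sub>C x - P x)" for n
  proof (induction n)
    case 0
    have M: "0 \<le> M" "t 0 = M"
      using onorm_pos_le[OF bounded_clinear_imp_bounded_linear[OF P]] by (simp_all add: M_def t_def)
    have "onorm P < M - cmod l" by (simp add: M_def)
    also have "M - cmod l \<le> cmod (l + complex_of_real M * v)"
      using norm_triangle_ineq2[of "complex_of_real M * v" "- l"] v M(1)
      by (simp add: norm_mult add.commute)
    also have "M = t 0" using M(2) ..
    finally have "onorm P < cmod (l + complex_of_real (t 0) * v)" .
    then show ?case by (rule op_invertible_scaleC_minus_if_onorm_less[OF P])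
  next
    case (Suc n)
    have "(l + complex_of_real (t n) * v) - (l + complex_of_real (t (Suc n)) * v)
        = complex_of_real (t n - t (Suc n)) * v"
      by (simp add: algebra_simps)
    moreover have "\<bar>t n - t (Suc n)\<bar> < c" using c by (simp add: t_def max_def field_simps)
    ultimately have near: "cmod ((l + complex_of_real (t n) * v) - (l + complex_of_real (t (Suc n)) * v)) < c"
      using v by (simp only: norm_mult norm_of_real mult_1_right)
    have "0 \<le> t n" by (simp add: t_def)
    from op_invertible_scaleC_minus_near[OF Suc.IH c bounded_below[OF this] near] show ?case .
  qed
  obtain n :: nat where "M / (c / 2) \<le> n" using real_arch_simple by blast
  then have "t n = 0" using c by (simp add: t_def field_simps)
  with invertible[of n] show ?thesis by simp
qed

lemma op_spectrum_subset_if_nonneg_op: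
  fixes P :: "'a::chilbert_space \<Rightarrow> 'a"
  assumes nonneg: "nonneg_op P" and P: "bounded_clinear P"
  shows "op_spectrum P \<subseteq> {l. Im l = 0 \<and> 0 \<le> Re l}"
proof
  fix l assume l: "l \<in> op_spectrum P"
  show "l \<in> {l. Im l = 0 \<and> 0 \<le> Re l}"
  proof (rule ccontr)
    assume "l \<notin> {l. Im l = 0 \<and> 0 \<le> Re l}"
    then consider "Im l \<noteq> 0" | "Re l < 0" by fastforce
    then have "op_invertible (\<lambda>x. l *\<^sub>C x - P x)"
    proof cases
      case 1
      let ?v = "\<i> * sgn (Im l)"
      have "\<bar>Im l\<bar> * norm x \<le> norm ((l + complex_of_real t * ?v) *\<^sub>C x - P x)" if "0 \<le> t" for t x
        using that by (intro norm_scaleC_minus_ge_if_nonneg_op[OF nonneg]) (auto simp: sgn_if)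
      moreover have "0 < \<bar>Im l\<bar>" "cmod ?v = 1" using 1 by (simp_all add: norm_mult abs_sgn_eq)
      ultimately show ?thesis by (intro op_invertible_if_bounded_below_on_ray[OF P])
    next
      case 2
      have "- Re l * norm x \<le> norm ((l + complex_of_real t * -1) *\<^sub>C x - P x)" if "0 \<le> t" for t x
        using that by (intro norm_scaleC_minus_ge_if_nonneg_op[OF nonneg]) simp
      moreover have "0 < - Re l" "cmod (-1) = 1" using 2 by simp_all
      ultimately show ?thesis by (intro op_invertible_if_bounded_below_on_ray[OF P])
    qed
    then show False using l by (simp add: op_spectrum_def)
  qed
qed

section \<open>Estimates on sectors\<close>

(* The closed sector of the theorem; the half-line is only needed for gamma = 0, where the
   theorem stipulates that the closed sector is [0, infinity). *)
definition sector_closure :: "real \<Rightarrow> complex set" where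
  "sector_closure \<gamma> = closure (sector \<gamma>) \<union> {z. Im z = 0 \<and> 0 \<le> Re z}"

lemma sector_closure_subset:
  assumes "closed S" "0 \<le> \<gamma>"
    and polar: "\<And>\<rho> \<phi>. 0 \<le> \<rho> \<Longrightarrow> \<bar>\<phi>\<bar> \<le> \<gamma> \<Longrightarrow> complex_of_real \<rho> * cis \<phi> \<in> S"
  shows "sector_closure \<gamma> \<subseteq> S"
proof -
  have "sector \<gamma> \<subseteq> S" using polar by (force simp: sector_def)
  then have "closure (sector \<gamma>) \<subseteq> S" by (rule closure_minimal[OF _ assms(1)])
  moreover have "z \<in> S" if "Im z = 0" "0 \<le> Re z" for z
  proof -
    have "z = complex_of_real (Re z) * cis 0" using that(1) by (simp add: complex_eq_iff)
    then show ?thesis using polar[of "Re z" 0] that(2) assms(2) by simp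
  qed
  ultimately show ?thesis by (auto simp: sector_closure_def)
qed

lemma neg_sectorE:
  assumes "q \<in> uminus ` sector \<beta>"
  obtains r \<psi> where "0 < r" "\<bar>\<psi>\<bar> < \<beta>" "q = - (complex_of_real r * cis \<psi>)"
  using assms by (force simp: sector_def abs_less_iff)

lemma sin_le_cmod_one_plus_cis:
  assumes \<delta>: "0 < \<delta>" "\<delta> \<le> pi/2" and \<theta>: "\<bar>\<theta>\<bar> \<le> pi - \<delta>" and t: "0 \<le> t"
  shows "sin \<delta> \<le> cmod (1 + complex_of_real t * cis \<theta>)"
proof (cases "0 \<le> cos \<theta>")
  case True
  have "sin \<delta> \<le> 1" by simp
  also have "1 \<le> Re (1 + complex_of_real t * cis \<theta>)" using True t by simp
  also have "\<dots> \<le> cmod (1 + complex_of_real t * cis \<theta>)" by (rule complex_Re_le_cmod)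
  finally show ?thesis .
next
  case False
  have "\<not> \<bar>\<theta>\<bar> \<le> pi/2" using False cos_ge_zero[of "\<bar>\<theta>\<bar>"] by (cases "0 \<le> \<theta>") auto
  then have "sin \<delta> \<le> sin (pi - \<bar>\<theta>\<bar>)" using \<delta> \<theta> by (subst sin_mono_le_eq) auto
  also have "\<dots> = \<bar>sin \<theta>\<bar>"
    using \<theta> \<delta> sin_ge_zero[of \<theta>] sin_ge_zero[of "- \<theta>"] by (cases "0 \<le> \<theta>") auto
  also have "\<dots> = \<bar>Im (cis (- \<theta>) + complex_of_real t)\<bar>" by simp
  also have "\<dots> \<le> cmod (cis (- \<theta>) + complex_of_real t)" by (rule abs_Im_le_cmod)
  also have "\<dots> = cmod (cis \<theta> * (cis (- \<theta>) + complex_of_real t))" by (simp add: norm_mult)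
  also have "cis \<theta> * (cis (- \<theta>) + complex_of_real t) = 1 + complex_of_real t * cis \<theta>"
    by (simp add: distrib_left cis_mult mult.commute)
  finally show ?thesis .
qed

lemma sin_le_cmod_one_plus_mult:
  assumes \<delta>: "0 < \<delta>" "\<delta> \<le> pi/2" and "0 \<le> \<gamma>" "0 \<le> r" and \<psi>: "\<bar>\<psi>\<bar> + \<gamma> \<le> pi - \<delta>"
    and "\<mu> \<in> sector_closure \<gamma>"
  shows "sin \<delta> \<le> cmod (1 + complex_of_real r * cis \<psi> * \<mu>)"
proof -
  have "sector_closure \<gamma> \<subseteq> {\<mu>. sin \<delta> \<le> cmod (1 + complex_of_real r * cis \<psi> * \<mu>)}"
  proof (rule sector_closure_subset)
    show "closed {\<mu>. sin \<delta> \<le> cmod (1 + complex_of_real r * cis \<psi> * \<mu>)}"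
      by (intro closed_Collect_le continuous_intros)
    fix \<rho> \<phi> :: real assume "0 \<le> \<rho>" "\<bar>\<phi>\<bar> \<le> \<gamma>"
    then have "sin \<delta> \<le> cmod (1 + complex_of_real (r * \<rho>) * cis (\<psi> + \<phi>))"
      using \<psi> assms(4) by (intro sin_le_cmod_one_plus_cis[OF \<delta>]) auto
    then show "complex_of_real \<rho> * cis \<phi> \<in> {\<mu>. sin \<delta> \<le> cmod (1 + complex_of_real r * cis \<psi> * \<mu>)}"
      by (simp add: cis_mult[symmetric] mult_ac)
  qed (use assms in auto)
  then show ?thesis using assms by blast
qed

lemma sin_le_cmod_one_minus_mult_neg_sector:
  assumes q: "q \<in> uminus ` sector (pi - \<gamma>')" and \<gamma>: "0 \<le> \<gamma>" "\<gamma> < \<gamma>'" "\<gamma>' - \<gamma> \<le> pi/2"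
    and "\<mu> \<in> sector_closure \<gamma>"
  shows "sin (\<gamma>' - \<gamma>) \<le> cmod (1 - q * \<mu>)"
proof -
  obtain r \<psi> where "0 < r" "\<bar>\<psi>\<bar> < pi - \<gamma>'" "q = - (complex_of_real r * cis \<psi>)"
    using q by (rule neg_sectorE)
  then show ?thesis
    using sin_le_cmod_one_plus_mult[of "\<gamma>' - \<gamma>" \<gamma> r \<psi> \<mu>] \<gamma> assms(5) by simp
qed

lemma mult_neq_one_neg_sector:
  assumes q: "q \<in> uminus ` sector (pi - \<gamma>)" and "0 \<le> \<gamma>" and "\<mu> \<in> sector_closure \<gamma>"
  shows "q * \<mu> \<noteq> 1"
proof -
  obtain r \<psi> where r: "0 < r" and \<psi>: "\<bar>\<psi>\<bar> < pi - \<gamma>" and q: "q = - (complex_of_real r * cis \<psi>)"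
    using q by (rule neg_sectorE)
  define \<delta> where "\<delta> = min (pi - \<gamma> - \<bar>\<psi>\<bar>) (pi/2)"
  have \<delta>: "0 < \<delta>" "\<delta> \<le> pi/2" using \<psi> pi_gt_zero by (auto simp: \<delta>_def min_def)
  have "0 < sin \<delta>" using \<delta> by (intro sin_gt_zero) auto
  also have "sin \<delta> \<le> cmod (1 + complex_of_real r * cis \<psi> * \<mu>)"
    using assms r by (intro sin_le_cmod_one_plus_mult[OF \<delta>]) (auto simp: \<delta>_def)
  finally have "1 - q * \<mu> \<noteq> 0" by (simp add: q)
  then show ?thesis by simp
qed

lemma cos_mult_cmod_le_Re:
  assumes "0 \<le> \<gamma>" "\<gamma> \<le> pi" and "\<mu> \<in> sector_closure \<gamma>"
  shows "cos \<gamma> * cmod \<mu> \<le> Re \<mu>"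
proof -
  have "sector_closure \<gamma> \<subseteq> {\<mu>. cos \<gamma> * cmod \<mu> \<le> Re \<mu>}"
  proof (rule sector_closure_subset)
    show "closed {\<mu>. cos \<gamma> * cmod \<mu> \<le> Re \<mu>}" by (intro closed_Collect_le continuous_intros)
    fix \<rho> \<phi> :: real assume "0 \<le> \<rho>" "\<bar>\<phi>\<bar> \<le> \<gamma>"
    then have "cos \<gamma> \<le> cos \<bar>\<phi>\<bar>" using assms by (subst cos_mono_le_eq) auto
    then have "cos \<gamma> \<le> cos \<phi>" by simp
    with \<open>0 \<le> \<rho>\<close> show "complex_of_real \<rho> * cis \<phi> \<in> {\<mu>. cos \<gamma> * cmod \<mu> \<le> Re \<mu>}"
      by (simp add: norm_mult mult.commute mult_left_mono)
  qed (use assms in auto)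
  then show ?thesis using assms by blast
qed

lemma cmod_one_minus_le_in_cone:
  assumes \<gamma>: "0 \<le> \<gamma>" "\<gamma> \<le> pi/2" and cone: "cos \<gamma> * cmod \<nu> \<le> Re \<nu>" and "cmod \<nu> \<le> 1"
  shows "cmod (1 - \<nu>) \<le> 2 * sin \<gamma> + (1 - cmod \<nu>)"
proof (cases "\<nu> = 0")
  case True
  then show ?thesis using \<gamma> by (simp add: sin_ge_zero)
next
  case False
  have sin: "0 \<le> sin \<gamma>" using \<gamma> by (intro sin_ge_zero) auto
  define a where "a = cmod \<nu>"
  define u where "u = \<nu> / complex_of_real a"
  have a: "0 < a" "a \<le> 1" using False assms(4) by (simp_all add: a_def)
  have \<nu>: "\<nu> = complex_of_real a * u" using a by (simp add: u_def)
  have u: "cmod u = 1" using False by (simp add: u_def a_def norm_divide)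
  have Re_u: "cos \<gamma> \<le> Re u" using cone a(1) by (simp add: \<nu> norm_mult u mult.commute)
  have "(Re u)\<^sup>2 + (Im u)\<^sup>2 = 1" using u cmod_power2[of u] by simp
  then have "(cmod (1 - u))\<^sup>2 = 2 - 2 * Re u"
    by (simp add: cmod_power2 power2_diff)
  also have "\<dots> \<le> 2 - 2 * (cos \<gamma>)\<^sup>2"
    using Re_u \<gamma> cos_ge_zero[of \<gamma>] mult_left_le_one_le[of "cos \<gamma>" "cos \<gamma>"]
    by (simp add: power2_eq_square)
  also have "\<dots> = 2 * (sin \<gamma>)\<^sup>2" using sin_cos_squared_add[of \<gamma>] by linarith
  also have "\<dots> \<le> (2 * sin \<gamma>)\<^sup>2" by (simp add: power2_eq_square)
  finally have "cmod (1 - u) \<le> 2 * sin \<gamma>"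
    by (rule power2_le_imp_le) (use sin in simp)
  moreover have "cmod (u - \<nu>) = 1 - a"
  proof -
    have "u - \<nu> = complex_of_real (1 - a) * u" by (simp add: \<nu> algebra_simps)
    then show ?thesis using a by (simp only: norm_mult norm_of_real u) simp
  qed
  ultimately show ?thesis using norm_triangle_ineq[of "1 - u" "u - \<nu>"] by (simp add: a_def)
qed


lemma cmod_one_minus_le_4_cmod_one_minus_mult:
  assumes \<gamma>: "0 \<le> \<gamma>" "\<gamma> \<le> pi/2" and cone: "cos \<gamma> * cmod \<nu> \<le> Re \<nu>" and \<nu>: "cmod \<nu> \<le> 1"
    and w: "cmod w < 1 - sin \<gamma>"
  shows "cmod (1 - w) \<le> 4 * cmod (1 - w * \<nu>)"
proof -
  have w1: "cmod w \<le> 1" using w \<gamma> sin_ge_zero[of \<gamma>] by simp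
  have lower: "1 - cmod w * cmod \<nu> \<le> cmod (1 - w * \<nu>)"
    using norm_triangle_ineq2[of 1 "w * \<nu>"] by (simp add: norm_mult)
  have "cmod w * cmod \<nu> \<le> cmod \<nu>" "cmod w * cmod \<nu> \<le> cmod w"
    using w1 \<nu> by (simp_all add: mult_left_le_one_le mult_left_le)
  then have L: "1 - cmod \<nu> \<le> cmod (1 - w * \<nu>)" "sin \<gamma> \<le> cmod (1 - w * \<nu>)"
    using lower w by linarith+
  have "cmod (1 - w) \<le> cmod (1 - w * \<nu>) + cmod (w * (\<nu> - 1))"
    using norm_triangle_ineq[of "1 - w * \<nu>" "w * (\<nu> - 1)"] by (simp add: algebra_simps)
  also have "cmod (w * (\<nu> - 1)) \<le> cmod (1 - \<nu>)"
    using w1 by (simp add: norm_mult norm_minus_commute mult_left_le_one_le)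
  also have "\<dots> \<le> 2 * sin \<gamma> + (1 - cmod \<nu>)" by (rule cmod_one_minus_le_in_cone[OF \<gamma> cone \<nu>])
  finally show ?thesis using L by simp
qed

theorem onorm_res_op_eq:
  fixes P :: "'a::chilbert_space \<Rightarrow> 'a"
  assumes N: "normal_op P" and not_invertible: "\<not> op_invertible P"
    and nonsingular: "\<And>\<mu>. \<mu> \<in> op_spectrum P \<Longrightarrow> q * \<mu> \<noteq> 1"
  shows "op_invertible (\<lambda>x. x - q *\<^sub>C P x)"
    and "\<exists>\<mu>0\<in>op_spectrum P. onorm (res_op q P) = 1 / cmod (1 - q * \<mu>0) \<and>
           (\<forall>\<mu>\<in>op_spectrum P. 1 / cmod (1 - q * \<mu>) \<le> onorm (res_op q P))"
proof -
  have spectrum: "op_spectrum (\<lambda>x. x - q *\<^sub>C P x) = (\<lambda>\<mu>. 1 - q * \<mu>) ` op_spectrum P"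
    using N not_invertible by (intro op_spectrum_one_minus_scaleC) (simp_all add: normal_op_def)
  have "0 \<notin> (\<lambda>\<mu>. 1 - q * \<mu>) ` op_spectrum P"
  proof
    assume "0 \<in> (\<lambda>\<mu>. 1 - q * \<mu>) ` op_spectrum P"
    then obtain \<mu> where "\<mu> \<in> op_spectrum P" "0 = 1 - q * \<mu>" by blast
    with nonsingular show False by simp
  qed
  then show invertible: "op_invertible (\<lambda>x. x - q *\<^sub>C P x)"
    by (simp add: op_invertible_iff_zero_notin_op_spectrum spectrum)
  then obtain S where S: "is_op_inverse (\<lambda>x. x - q *\<^sub>C P x) S" by (auto simp: op_invertible_iff)
  moreover have "op_spectrum (\<lambda>x. x - q *\<^sub>C P x) \<noteq> {}"
    using spectrum zero_in_op_spectrum[OF not_invertible] by blast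
  ultimately obtain \<zeta>0 where "\<zeta>0 \<in> op_spectrum (\<lambda>x. x - q *\<^sub>C P x)" "onorm S = 1 / cmod \<zeta>0"
    "\<forall>\<zeta>\<in>op_spectrum (\<lambda>x. x - q *\<^sub>C P x). 1 / cmod \<zeta> \<le> onorm S"
    using onorm_inverse_normal_op_eq[OF normal_op_one_minus_scaleC[OF N]] by blast
  moreover have "res_op q P = S" using is_op_inverse_imp_inv_eq[OF S] by (simp add: res_op_def)
  ultimately show "\<exists>\<mu>0\<in>op_spectrum P. onorm (res_op q P) = 1 / cmod (1 - q * \<mu>0) \<and>
      (\<forall>\<mu>\<in>op_spectrum P. 1 / cmod (1 - q * \<mu>) \<le> onorm (res_op q P))"
    unfolding spectrum by auto
qed

corollary onorm_res_op_le:
  fixes P :: "'a::chilbert_space \<Rightarrow> 'a"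
  assumes "normal_op P" "\<not> op_invertible P" "0 < m"
    and bounded_below: "\<And>\<mu>. \<mu> \<in> op_spectrum P \<Longrightarrow> m \<le> cmod (1 - q * \<mu>)"
  shows "onorm (res_op q P) \<le> 1 / m"
proof -
  have "q * \<mu> \<noteq> 1" if "\<mu> \<in> op_spectrum P" for \<mu>
    using bounded_below[OF that] \<open>0 < m\<close> by auto
  then obtain \<mu>0 where "\<mu>0 \<in> op_spectrum P" "onorm (res_op q P) = 1 / cmod (1 - q * \<mu>0)"
    using onorm_res_op_eq(2)[OF assms(1,2)] by blast
  then show ?thesis using bounded_below \<open>0 < m\<close> by (simp add: frac_le)
qed

lemma op_spectrum_subset_sector_closure_zero:
  fixes P :: "'a::chilbert_space \<Rightarrow> 'a"
  assumes "selfadjoint_op P" "nonneg_op P"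
  shows "op_spectrum P \<subseteq> sector_closure 0"
proof -
  have "op_spectrum P \<subseteq> {l. Im l = 0 \<and> 0 \<le> Re l}"
    using assms by (intro op_spectrum_subset_if_nonneg_op) (simp_all add: selfadjoint_op_def)
  then show ?thesis by (auto simp: sector_closure_def)
qed

lemma thm_hypD:
  fixes P :: "'a::chilbert_space \<Rightarrow> 'a"
  assumes "thm_hyp P \<gamma>"
  shows "normal_op P" "\<not> op_invertible P" "0 \<le> \<gamma>" "\<gamma> < pi/2"
    and "op_spectrum P \<subseteq> sector_closure \<gamma>"
proof -
  show "normal_op P" "\<not> op_invertible P" "0 \<le> \<gamma>" "\<gamma> < pi/2"
    using assms by (auto simp: thm_hyp_def)
  from assms consider "op_spectrum P \<subseteq> closure (sector \<gamma>)"
    | "\<gamma> = 0" "selfadjoint_op P" "nonneg_op P"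
    by (auto simp: thm_hyp_def)
  then show "op_spectrum P \<subseteq> sector_closure \<gamma>"
    by cases (auto simp: sector_closure_def dest!: op_spectrum_subset_sector_closure_zero)
qed

lemma mult_neq_one_on_op_spectrum:
  fixes P :: "'a::chilbert_space \<Rightarrow> 'a"
  assumes H: "thm_hyp P \<gamma>" and q: "q \<in> uminus ` sector (pi - \<gamma>) \<or> cmod q * onorm P < 1"
    and \<mu>: "\<mu> \<in> op_spectrum P"
  shows "q * \<mu> \<noteq> 1"
  using q
proof
  assume "q \<in> uminus ` sector (pi - \<gamma>)"
  then show ?thesis using thm_hypD[OF H] \<mu> by (intro mult_neq_one_neg_sector) auto
next
  assume small: "cmod q * onorm P < 1"
  have "cmod \<mu> \<le> onorm P"
    using op_spectrum_subset_cball[of P] thm_hypD(1)[OF H] \<mu> by (auto simp: normal_op_def)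
  then have "cmod (q * \<mu>) < 1"
    using small by (simp add: norm_mult) (meson mult_left_mono norm_ge_zero order.strict_trans1)
  then show ?thesis by auto
qed

lemma onorm_res_op_le_neg_sector:
  fixes P :: "'a::chilbert_space \<Rightarrow> 'a"
  assumes H: "thm_hyp P \<gamma>" and \<gamma>': "\<gamma> < \<gamma>'" "\<gamma>' < pi/2" and q: "q \<in> uminus ` sector (pi - \<gamma>')"
  shows "onorm (res_op q P) \<le> 1 / sin (\<gamma>' - \<gamma>)"
proof (rule onorm_res_op_le[OF thm_hypD(1,2)[OF H]])
  show "0 < sin (\<gamma>' - \<gamma>)" using \<gamma>' thm_hypD(3)[OF H] by (intro sin_gt_zero) auto
  show "sin (\<gamma>' - \<gamma>) \<le> cmod (1 - q * \<mu>)" if "\<mu> \<in> op_spectrum P" for \<mu>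
    using that thm_hypD[OF H] \<gamma>' by (intro sin_le_cmod_one_minus_mult_neg_sector[OF q]) auto
qed

lemma onorm_res_op_le_four:
  fixes P :: "'a::chilbert_space \<Rightarrow> 'a"
  assumes N: "normal_op P" and "\<not> op_invertible P" and \<gamma>: "0 \<le> \<gamma>" "\<gamma> \<le> pi/2"
    and spectrum: "op_spectrum P \<subseteq> sector_closure \<gamma>" and q: "cmod q * onorm P < 1 - sin \<gamma>"
  shows "onorm (res_op q P) \<le> 4 / cmod (1 - q * complex_of_real (onorm P))"
proof -
  define p where "p = onorm P"
  have P: "bounded_clinear P" using N by (simp add: normal_op_def)
  have p: "0 \<le> p" unfolding p_def by (rule onorm_pos_le[OF bounded_clinear_imp_bounded_linear[OF P]])
  have "0 \<le> sin \<gamma>" using \<gamma> by (intro sin_ge_zero) auto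
  then have "cmod (q * complex_of_real p) < 1" using q p by (simp add: p_def norm_mult)
  then have pos: "0 < cmod (1 - q * complex_of_real p)"
    using norm_triangle_ineq2[of 1 "q * complex_of_real p"] by (simp only: norm_one)
  have four: "cmod (1 - q * complex_of_real p) \<le> 4 * cmod (1 - q * \<mu>)" if \<mu>: "\<mu> \<in> op_spectrum P" for \<mu>
  proof (cases "p = 0")
    case True
    then show ?thesis using op_spectrum_subset_cball[OF P] \<mu> by (auto simp: p_def)
  next
    case False
    have "cmod \<mu> \<le> p" using op_spectrum_subset_cball[OF P] \<mu> by (auto simp: p_def)
    moreover have "cos \<gamma> * cmod \<mu> \<le> Re \<mu>"
      using \<gamma> spectrum \<mu> by (intro cos_mult_cmod_le_Re) auto
    ultimately have "cmod (1 - q * complex_of_real p) \<le> 4 * cmod (1 - q * complex_of_real p * (\<mu> / p))"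
      using False p q \<gamma>
      by (intro cmod_one_minus_le_4_cmod_one_minus_mult)
        (simp_all add: norm_divide norm_mult p_def field_simps)
    with False show ?thesis by simp
  qed
  have "onorm (res_op q P) \<le> 1 / (cmod (1 - q * complex_of_real p) / 4)"
    using pos four by (intro onorm_res_op_le[OF N \<open>\<not> op_invertible P\<close>]) (simp_all add: mult.commute)
  then show ?thesis by (simp add: p_def)
qed

theorem theorem3p2:
  shows "(\<forall>(P::'a::chilbert_space \<Rightarrow> 'a) \<gamma>. thm_hyp P \<gamma> \<longrightarrow>
      (\<forall>q. (q \<in> uminus ` sector (pi - \<gamma>) \<or> cmod q * onorm P < 1) \<longrightarrow>
          op_invertible (\<lambda>x. x - q *\<^sub>C P x) \<and>
          (\<exists>\<mu>0\<in>op_spectrum P. onorm (res_op q P) = 1 / cmod (1 - q * \<mu>0) \<and>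
             (\<forall>\<mu>\<in>op_spectrum P. 1 / cmod (1 - q * \<mu>) \<le> onorm (res_op q P))))
    \<and> (\<forall>\<gamma>'. \<gamma> < \<gamma>' \<and> \<gamma>' < pi/2 \<longrightarrow>
          (\<forall>q\<in>uminus ` sector (pi - \<gamma>'). onorm (res_op q P) \<le> 1 / sin (\<gamma>' - \<gamma>)))
    \<and> (selfadjoint_op P \<and> nonneg_op P \<longrightarrow>
          (\<forall>q. cmod q * onorm P < 1 \<longrightarrow>
             onorm (res_op q P) \<le> 4 / cmod (1 - q * complex_of_real (onorm P)))))
  \<and> (\<forall>r. 0 < r \<and> r < 1 \<longrightarrow> (\<exists>C. \<forall>(P::'a \<Rightarrow> 'a) \<gamma>.
        thm_hyp P \<gamma> \<and> 0 < sin \<gamma> \<and> sin \<gamma> < 1 - r \<longrightarrow>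
        (\<forall>q. cmod q * onorm P < 1 - sin \<gamma> \<longrightarrow>
           onorm (res_op q P) \<le> C / cmod (1 - q * complex_of_real (onorm P)))))"
proof (intro conjI allI impI ballI exI[of _ "4::real"])
  fix P :: "'a \<Rightarrow> 'a" and \<gamma> q
  assume H: "thm_hyp P \<gamma>" and q: "q \<in> uminus ` sector (pi - \<gamma>) \<or> cmod q * onorm P < 1"
  note res_op = onorm_res_op_eq[OF thm_hypD(1,2)[OF H] mult_neq_one_on_op_spectrum[OF H q]]
  show "op_invertible (\<lambda>x. x - q *\<^sub>C P x)" by (rule res_op(1))
  show "\<exists>\<mu>0\<in>op_spectrum P. onorm (res_op q P) = 1 / cmod (1 - q * \<mu>0) \<and>
      (\<forall>\<mu>\<in>op_spectrum P. 1 / cmod (1 - q * \<mu>) \<le> onorm (res_op q P))" by (rule res_op(2))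
next
  fix P :: "'a \<Rightarrow> 'a" and \<gamma> \<gamma>' q
  assume "thm_hyp P \<gamma>" "\<gamma> < \<gamma>' \<and> \<gamma>' < pi/2" "q \<in> uminus ` sector (pi - \<gamma>')"
  then show "onorm (res_op q P) \<le> 1 / sin (\<gamma>' - \<gamma>)" by (intro onorm_res_op_le_neg_sector) auto
next
  fix P :: "'a \<Rightarrow> 'a" and \<gamma> q
  assume "thm_hyp P \<gamma>" "selfadjoint_op P \<and> nonneg_op P" "cmod q * onorm P < 1"
  then show "onorm (res_op q P) \<le> 4 / cmod (1 - q * complex_of_real (onorm P))"
    using thm_hypD(1,2)[of P \<gamma>] op_spectrum_subset_sector_closure_zero[of P]
    by (intro onorm_res_op_le_four[of P 0]) auto
next
  fix r :: real and P :: "'a \<Rightarrow> 'a" and \<gamma> q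
  assume "thm_hyp P \<gamma> \<and> 0 < sin \<gamma> \<and> sin \<gamma> < 1 - r" "cmod q * onorm P < 1 - sin \<gamma>"
  then show "onorm (res_op q P) \<le> 4 / cmod (1 - q * complex_of_real (onorm P))"
    using thm_hypD[of P \<gamma>] by (intro onorm_res_op_le_four) auto
qed

end
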